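(* Let $z=(z_1,\dots,z_l)$ be a complex vector split into sub-vectors, and let $g_j(z)=\tilde g_j(z)+c_j$, $j=1,\dots,m$, where $c_j\in\mathbb C$ and each $\tilde g_j(z_1,\dots,z_l)$ is multi-linear in the sub-vectors; let $f=\sum_{j=1}^m|g_j|^2$. Let \[ \Xi=\begin{pmatrix} z_1&z_1&\cdots&z_1\\ -z_2&0&\cdots&0\\ 0&-z_3&\cdots&0\\ \vdots&\vdots&\ddots&\vdots\\ 0&0&\cdots&-z_l\end{pmatrix} \] (with $l-1$ block columns, the $i$-th having $z_1$ in the first block and $-z_{i+1}$ in the $(i+1)$-st block). Assume at the current point $z$ the kernel of the mixed Wirtinger Hessian $\frac{\partial^2 f}{\partial\bar z\partial z}$ is spanned by the columns of $\Xi$. Then $\frac{\partial^2 f}{\partial\bar z\partial z}+\Xi\Xi^*$ is invertible, the limit $\lim_{\varepsilon\to0^+}\big(\frac{\partial^2 f}{\partial\bar z\partial z}+\varepsilon\Xi\Xi^*\big)^{-1}\frac{\partial f}{\partial\bar z}$ exists, and \[ z-\Big(\tfrac{\partial^2 f}{\partial\bar z\partial z}+\Xi\Xi^*\Big)^{-1}\tfrac{\partial f}{\partial\bar z}=z-\lim_{\varepsilon\to0}\Big(\tfrac{\partial^2 f}{\partial\bar z\partial z}+\varepsilon\Xi\Xi^*\Big)^{-1}\tfrac{\partial f}{\partial\bar z}. \]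
   Context: Wirtinger derivatives: $\frac{\partial}{\partial\bar z}=\frac12(\frac{\partial}{\partial\mathrm{Re}\,z}+i\frac{\partial}{\partial\mathrm{Im}\,z})$ componentwise; for $f=\sum|g_j|^2$ with $g_j$ holomorphic, $\frac{\partial f}{\partial\bar z}=\sum_j g_j\overline{g_j'}$ and $\frac{\partial^2 f}{\partial\bar z\partial z}=\sum_j\overline{g_j'}(g_j')^T$, where $g_j'$ is the column vector of holomorphic derivatives. Multi-linear means linear in each sub-vector $z_i$ separately when the others are fixed. *)

theory Defs
  imports "HOL-Analysis.Analysis"
begin

text \<open>Coordinates of z are indexed by a finite type 'n; the function blk assigns to
  each coordinate the number (in 1..l) of the sub-vector z_1,...,z_l it belongs to.\<close>

definition blk_upd :: "('n \<Rightarrow> nat) \<Rightarrow> nat \<Rightarrow> complex^'n \<Rightarrow> complex^'n \<Rightarrow> complex^'n" where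
  "blk_upd blk k z u = (\<chi> i. if blk i = k then u $ i else z $ i)"

definition multilinear_blocks :: "('n \<Rightarrow> nat) \<Rightarrow> nat \<Rightarrow> (complex^'n \<Rightarrow> complex) \<Rightarrow> bool" where
  "multilinear_blocks blk l G \<longleftrightarrow>
     (\<forall>k\<in>{1..l}. \<forall>z u v. \<forall>a::complex.
        G (blk_upd blk k z (u + v)) = G (blk_upd blk k z u) + G (blk_upd blk k z v) \<and>
        G (blk_upd blk k z (a *s u)) = a * G (blk_upd blk k z u))"

definition hol_grad :: "(complex^'n \<Rightarrow> complex) \<Rightarrow> complex^'n \<Rightarrow> complex^'n" where
  "hol_grad g z = (\<chi> i. deriv (\<lambda>t. g (z + t *s axis i 1)) 0)"

text \<open>For f = sum_j |g_j|^2 with g_j holomorphic: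
  d f / d zbar = sum_j g_j conj(g_j'),  d^2 f/(d zbar d z) = sum_j conj(g_j') (g_j')^T.\<close>
definition wirt_grad :: "nat \<Rightarrow> (nat \<Rightarrow> complex^'n \<Rightarrow> complex) \<Rightarrow> complex^'n \<Rightarrow> complex^'n" where
  "wirt_grad m g z = (\<Sum>j\<in>{1..m}. g j z *s (\<chi> i. cnj (hol_grad (g j) z $ i)))"

definition wirt_hess :: "nat \<Rightarrow> (nat \<Rightarrow> complex^'n \<Rightarrow> complex) \<Rightarrow> complex^'n \<Rightarrow> complex^'n^'n" where
  "wirt_hess m g z = (\<Sum>j\<in>{1..m}. (\<chi> r s. cnj (hol_grad (g j) z $ r) * hol_grad (g j) z $ s))"

definition Xi_col :: "('n \<Rightarrow> nat) \<Rightarrow> complex^'n \<Rightarrow> nat \<Rightarrow> complex^'n" where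
  "Xi_col blk z i = (\<chi> k. if blk k = 1 then z $ k else if blk k = i + 1 then - z $ k else 0)"

definition Xi_XiH :: "('n \<Rightarrow> nat) \<Rightarrow> nat \<Rightarrow> complex^'n \<Rightarrow> complex^'n^'n" where
  "Xi_XiH blk l z = (\<Sum>i\<in>{1..l-1}. (\<chi> r s. Xi_col blk z i $ r * cnj (Xi_col blk z i $ s)))"

end

theory Submission
  imports Defs
begin

text \<open>Both Hessians are sums of rank-one matrices: H = sum_j u_j u_j^* with u_j the
  conjugated holomorphic gradients, and Xi Xi^* = sum_i xi_i xi_i^*. Since the columns xi_i lie in
  ker H, they are orthogonal to every u_j, hence to the range of H, which contains df/d(zbar).
  For e > 0 the quadratic form of H + e Xi Xi^* vanishes only on the intersection of ker H and its
  orthogonal complement, so H + e Xi Xi^* is invertible. If (H + Xi Xi^*) y = df/d(zbar), then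
  Xi Xi^* y lies in the span of the xi_i and is orthogonal to it, so Xi Xi^* y = 0 and y solves
  (H + e Xi Xi^*) y = df/d(zbar) for every e > 0: the regularised solutions do not depend on e.\<close>

lemma matrix_inv:
  fixes A :: "'a::semiring_1^'n^'n"
  assumes "invertible A"
  shows matrix_mult_matrix_inv: "A ** matrix_inv A = mat 1"
    and matrix_inv_mult: "matrix_inv A ** A = mat 1"
  using someI_ex[OF assms[unfolded invertible_def]] unfolding matrix_inv_def by blast+

lemma matrix_inv_mult_vec_eq:
  fixes A :: "'a::comm_semiring_1^'n^'n"
  assumes "invertible A" and "A *v y = b"
  shows "matrix_inv A *v b = y"
  using assms by (metis matrix_inv_mult matrix_vector_mul_assoc matrix_vector_mul_lid)

lemma matrix_sum_mult_vec: "(\<Sum>j\<in>S. A j) *v y = (\<Sum>j\<in>S. A j *v y)"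
  by (induction S rule: infinite_finite_induct) (simp_all add: matrix_vector_mult_add_rdistrib)

lemma scaleR_matrix_mult_vec: "((e::real) *\<^sub>R (A::complex^'n^'m)) *v y = e *\<^sub>R (A *v y)"
  by (simp add: vec_eq_iff matrix_vector_mult_def scaleR_sum_right)

definition cinner :: "complex^'n \<Rightarrow> complex^'n \<Rightarrow> complex" where
  "cinner u v = (\<Sum>k\<in>UNIV. cnj (u$k) * v$k)"

lemma cinner_zero_left [simp]: "cinner 0 v = 0"
  and cinner_zero_right [simp]: "cinner u 0 = 0"
  and cinner_add_left: "cinner (u + w) v = cinner u v + cinner w v"
  and cinner_add_right: "cinner u (v + w) = cinner u v + cinner u w"
  and cinner_scale_left: "cinner (c *s u) v = cnj c * cinner u v"
  and cinner_scale_right: "cinner u (c *s v) = c * cinner u v"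
  unfolding cinner_def by (simp_all add: sum.distrib sum_distrib_left algebra_simps)

lemma cinner_scaleR_right: "cinner u (e *\<^sub>R v) = of_real e * cinner u v"
  unfolding cinner_def vector_scaleR_component
  by (simp add: sum_distrib_left scaleR_conv_of_real algebra_simps)

lemma cinner_sum_right: "cinner u (\<Sum>j\<in>S. f j) = (\<Sum>j\<in>S. cinner u (f j))"
  unfolding cinner_def by (simp add: sum_component sum_distrib_left sum.swap[of _ S])

lemma cnj_cinner: "cnj (cinner u v) = cinner v u"
  unfolding cinner_def by (simp add: mult.commute)

lemma cinner_self: "cinner x x = of_real ((norm x)\<^sup>2)"
proof -
  have "cinner x x = (\<Sum>k\<in>UNIV. of_real ((norm (x$k))\<^sup>2))"
    unfolding cinner_def complex_norm_square by (simp only: mult.commute)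
  also have "\<dots> = of_real ((norm x)\<^sup>2)"
    unfolding of_real_sum[symmetric] power2_norm_eq_inner inner_vec_def ..
  finally show ?thesis .
qed

lemma cinner_self_eq_0 [simp]: "cinner x x = 0 \<longleftrightarrow> x = 0"
  by (simp add: cinner_self)

lemma cinner_span_left:
  assumes "\<forall>s\<in>S. cinner s x = 0" and "w \<in> vec.span S"
  shows "cinner w x = 0"
  using assms(2)
proof (induction rule: vec.span_induct)
  case base
  show ?case
    unfolding vec.subspace_def by (simp add: cinner_add_left cinner_scale_left)
qed (use assms(1) in simp)

lemma orthogonal_span_eq_0:
  assumes "\<forall>s\<in>S. cinner s x = 0" and "x \<in> vec.span S"
  shows "x = 0"
  using cinner_span_left[OF assms] by simp

definition outer_prod :: "complex^'n \<Rightarrow> complex^'n \<Rightarrow> complex^'n^'n" where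
  "outer_prod u v = (\<chi> r s. u$r * cnj (v$s))"

definition rank_one_sum :: "('a \<Rightarrow> complex^'n) \<Rightarrow> 'a set \<Rightarrow> complex^'n^'n" where
  "rank_one_sum u S = (\<Sum>j\<in>S. outer_prod (u j) (u j))"

lemma outer_prod_mult_vec: "outer_prod u v *v y = cinner v y *s u"
  unfolding outer_prod_def cinner_def matrix_vector_mult_def
  by (simp add: vec_eq_iff sum_distrib_left algebra_simps)

lemma rank_one_sum_mult_vec: "rank_one_sum u S *v y = (\<Sum>j\<in>S. cinner (u j) y *s u j)"
  unfolding rank_one_sum_def matrix_sum_mult_vec outer_prod_mult_vec ..

lemma rank_one_sum_mult_vec_in_span: "rank_one_sum u S *v y \<in> vec.span (u ` S)"
  unfolding rank_one_sum_mult_vec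
  by (intro vec.span_sum vec.span_scale vec.span_base) simp

lemma cinner_rank_one_sum:
  "cinner x (rank_one_sum u S *v x) = of_real (\<Sum>j\<in>S. (norm (cinner (u j) x))\<^sup>2)"
  unfolding rank_one_sum_mult_vec cinner_sum_right cinner_scale_right of_real_sum
  by (simp only: complex_norm_square cnj_cinner)

lemma rank_one_sum_mult_vec_eq_0:
  assumes "finite S"
  shows "rank_one_sum u S *v x = 0 \<longleftrightarrow> (\<forall>j\<in>S. cinner (u j) x = 0)"
proof
  assume "rank_one_sum u S *v x = 0"
  then have "of_real (\<Sum>j\<in>S. (norm (cinner (u j) x))\<^sup>2) = (0::complex)"
    unfolding cinner_rank_one_sum[symmetric] by simp
  then have "(\<Sum>j\<in>S. (norm (cinner (u j) x))\<^sup>2) = 0"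
    by (simp only: of_real_eq_0_iff)
  then show "\<forall>j\<in>S. cinner (u j) x = 0"
    using assms by (simp add: sum_nonneg_eq_0_iff)
qed (simp add: rank_one_sum_mult_vec)

locale rank_one_kernel_span =
  fixes u :: "'a \<Rightarrow> complex^'n" and J :: "'a set"
    and v :: "'b \<Rightarrow> complex^'n" and I :: "'b set"
  assumes finite_J: "finite J" and finite_I: "finite I"
    and kernel_eq_span: "{x. rank_one_sum u J *v x = 0} = vec.span (v ` I)"
begin

abbreviation "H \<equiv> rank_one_sum u J"
abbreviation "X \<equiv> rank_one_sum v I"

lemma cinner_kernel_range:
  assumes "i \<in> I" and "j \<in> J"
  shows "cinner (v i) (u j) = 0"
proof -
  have "H *v v i = 0"
    using kernel_eq_span assms(1) vec.span_base[of "v i" "v ` I"] by auto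
  then have "cinner (u j) (v i) = 0"
    using rank_one_sum_mult_vec_eq_0[OF finite_J] assms(2) by blast
  then show ?thesis
    using cnj_cinner[of "u j" "v i"] by simp
qed

lemma cinner_kernel_range_span:
  assumes "i \<in> I" and "b \<in> vec.span (u ` J)"
  shows "cinner (v i) b = 0"
proof -
  have "cinner b (v i) = 0"
    using cinner_span_left[OF _ assms(2)] cinner_kernel_range[OF assms(1)] cnj_cinner
    by (metis complex_cnj_zero imageE)
  then show ?thesis
    using cnj_cinner[of b "v i"] by simp
qed

lemma invertible_regularized:
  assumes "e > 0"
  shows "invertible (H + e *\<^sub>R X)"
  unfolding invertible_left_inverse matrix_left_invertible_ker
proof (intro allI impI)
  fix x
  define p where "p = (\<Sum>j\<in>J. (norm (cinner (u j) x))\<^sup>2)"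
  define q where "q = (\<Sum>i\<in>I. (norm (cinner (v i) x))\<^sup>2)"
  assume "(H + e *\<^sub>R X) *v x = 0"
  then have "cinner x (H *v x + e *\<^sub>R (X *v x)) = 0"
    by (simp add: matrix_vector_mult_add_rdistrib scaleR_matrix_mult_vec)
  then have "of_real (p + e * q) = (0::complex)"
    unfolding cinner_add_right cinner_scaleR_right cinner_rank_one_sum p_def q_def
    by (simp only: of_real_add of_real_mult)
  then have "p + e * q = 0"
    by (simp only: of_real_eq_0_iff)
  moreover have "p \<ge> 0" and "e * q \<ge> 0"
    unfolding p_def q_def using assms by (simp_all add: sum_nonneg)
  ultimately have "p = 0" and "q = 0"
    using assms by (simp_all add: add_nonneg_eq_0_iff)
  then have "H *v x = 0" and orth: "\<forall>i\<in>I. cinner (v i) x = 0"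
    unfolding p_def q_def using finite_I finite_J
    by (simp_all add: sum_nonneg_eq_0_iff rank_one_sum_mult_vec)
  then have "x \<in> vec.span (v ` I)"
    using kernel_eq_span by blast
  with orth show "x = 0"
    by (intro orthogonal_span_eq_0) auto
qed

lemma invertible_sum: "invertible (H + X)"
  using invertible_regularized[of 1] by simp

lemma regularized_solve_eq:
  assumes "b \<in> vec.span (u ` J)" and "e > 0"
  shows "matrix_inv (H + e *\<^sub>R X) *v b = matrix_inv (H + X) *v b"
proof -
  define y where "y = matrix_inv (H + X) *v b"
  have "(H + X) *v y = b"
    unfolding y_def matrix_vector_mul_assoc matrix_mult_matrix_inv[OF invertible_sum] by simp
  then have "H *v y + X *v y = b"
    by (simp only: matrix_vector_mult_add_rdistrib)
  then have "cinner (v i) (X *v y) = 0" if "i \<in> I" for i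
    using cinner_kernel_range_span[OF that assms(1)]
      cinner_kernel_range_span[OF that rank_one_sum_mult_vec_in_span]
    by (metis add_0 cinner_add_right)
  then have "X *v y = 0"
    by (intro orthogonal_span_eq_0[OF _ rank_one_sum_mult_vec_in_span]) blast
  with \<open>H *v y + X *v y = b\<close> have "(H + e *\<^sub>R X) *v y = b"
    by (simp add: matrix_vector_mult_add_rdistrib scaleR_matrix_mult_vec)
  then show ?thesis
    unfolding y_def[symmetric] by (rule matrix_inv_mult_vec_eq[OF invertible_regularized[OF assms(2)]])
qed

lemma tendsto_regularized_solve:
  assumes "b \<in> vec.span (u ` J)"
  shows "((\<lambda>e::real. matrix_inv (H + e *\<^sub>R X) *v b) \<longlongrightarrow> matrix_inv (H + X) *v b) (at_right 0)"
proof (rule tendsto_eventually)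
  show "\<forall>\<^sub>F e in at_right 0. matrix_inv (H + e *\<^sub>R X) *v b = matrix_inv (H + X) *v b"
    using eventually_at_right_less[of "0::real"]
    by (rule eventually_mono) (rule regularized_solve_eq[OF assms])
qed

end

theorem lemma9:
  fixes blk :: "'n::finite \<Rightarrow> nat" and l m :: nat
    and gt :: "nat \<Rightarrow> complex^'n \<Rightarrow> complex" and c :: "nat \<Rightarrow> complex"
    and z :: "complex^'n"
  defines "g \<equiv> (\<lambda>j w. gt j w + c j)"
  defines "H \<equiv> wirt_hess m g z"
  defines "b \<equiv> wirt_grad m g z"
  defines "X \<equiv> Xi_XiH blk l z"
  assumes blk_range: "\<forall>i. blk i \<in> {1..l}"
    and multilin: "\<forall>j\<in>{1..m}. multilinear_blocks blk l (gt j)"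
    and kernel: "{x. H *v x = 0} = vec.span (Xi_col blk z ` {1..l-1})"
  shows "invertible (H + X)
    \<and> (\<exists>L. ((\<lambda>\<epsilon>::real. matrix_inv (H + \<epsilon> *\<^sub>R X) *v b) \<longlongrightarrow> L) (at_right 0))
    \<and> z - matrix_inv (H + X) *v b
        = z - Lim (at_right 0) (\<lambda>\<epsilon>::real. matrix_inv (H + \<epsilon> *\<^sub>R X) *v b)"
proof -
  define u where "u j = (\<chi> k. cnj (hol_grad (g j) z $ k))" for j
  have H_eq: "H = rank_one_sum u {1..m}"
    unfolding H_def wirt_hess_def rank_one_sum_def outer_prod_def u_def by simp
  have X_eq: "X = rank_one_sum (Xi_col blk z) {1..l-1}"
    unfolding X_def Xi_XiH_def rank_one_sum_def outer_prod_def ..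
  have b_span: "b \<in> vec.span (u ` {1..m})"
    unfolding b_def wirt_grad_def u_def[symmetric]
    by (intro vec.span_sum vec.span_scale vec.span_base) simp
  interpret rank_one_kernel_span u "{1..m}" "Xi_col blk z" "{1..l-1}"
    using kernel by unfold_locales (simp_all add: H_eq)
  have lim: "((\<lambda>\<epsilon>::real. matrix_inv (H + \<epsilon> *\<^sub>R X) *v b) \<longlongrightarrow> matrix_inv (H + X) *v b) (at_right 0)"
    unfolding H_eq X_eq by (rule tendsto_regularized_solve[OF b_span])
  have "invertible (H + X)"
    unfolding H_eq X_eq by (rule invertible_sum)
  moreover have "Lim (at_right 0) (\<lambda>\<epsilon>::real. matrix_inv (H + \<epsilon> *\<^sub>R X) *v b) = matrix_inv (H + X) *v b"
    using tendsto_Lim[OF trivial_limit_at_right_real lim] .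
  ultimately show ?thesis
    using lim by auto
qed

end
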